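(* For every $(x,a)\in H\times\mathcal{A}$, $Q^{\delta,\mathscr{P}}_{\pi}(x,a)$ equals the optimal value of the convex program \[ \inf_{\lambda\ge0,\ h:\mathcal{X}\to\mathbb{R}}\ \Big(\lambda\delta+\sum_{y\in\mathcal{X}}h(y)P_{x,a}(y)\Big) \] subject to \[ \max_{l\in\mathcal{X}}\Big(-\lambda|l-y|+c(x,a,l)+\sum_{a'\in\mathcal{A}}Q^{\delta,\mathscr{P}}_{\pi}(l,a')\pi(a'|l)\Big)\le h(y)\quad\text{for all }y\in\mathcal{X}, \] where $c(x,a,l)=1$ if $l\in U$ and $c(x,a,l)=0$ otherwise.
   Context: Consider a Markov decision process with a finite state set $\mathcal{X}$, viewed as a subset of $\mathbb{R}$ (so $|y-z|$ is the distance between states), and a finite action set $\mathcal{A}$. The state set is partitioned into a goal set $E$, a forbidden (unsafe) set $U$, and $H:=\mathcal{X}\setminus(E\cup U)$; $E$ and $U$ are terminal (the process stops there). For each $(x,a)\in H\times\mathcal{A}$ a nominal transition probability $\mathcal{P}_{x,a}=\{P_{x,a}(y)\}_{y\in\mathcal{X}}$ on $\mathcal{X}$ is given, and $\mathscr{P}=\{\mathcal{P}_{x,a}\}_{(x,a)\in H\times\mathcal{A}}$; transition probabilities are time-invariant. The sample space is $\Omega=(\mathcal{X}\times\mathcal{A})^{\infty}$ with coordinate processes $X_t,A_t$. A stationary policy is $\pi:\mathcal{X}\to\mathscr{M}(\mathcal{A})$, written $\pi(a|x)$. For any collection $\tilde{\mathscr{P}}=\{\tilde{\mathcal{P}}_{x,a}\}_{(x,a)\in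 H\times\mathcal{A}}$ of transition probabilities, $\mathbb{E}^{\tilde{\mathscr{P}}}_{\pi}$ denotes expectation for the process with $X_{t+1}\sim\tilde{\mathcal{P}}_{X_t,A_t}$ and $A_t\sim\pi(\cdot|X_t)$ (except when $A_0$ is conditioned on). For $S\subseteq\mathcal{X}$, $\tau_S$ is the first hitting time of $S$, and $\tau=\tau_{E\cup U}$. The 1-Wasserstein distance between probability measures $\mu,\nu$ on $\mathcal{X}$ is $W(\mu,\nu)=\min\{\sum_{(y,z)}\Gamma(y,z)|y-z| : \Gamma\in\mathscr{M}(\mathcal{X}\times\mathcal{X}),\ \sum_z\Gamma(y,z)=\mu(y),\ \sum_y\Gamma(y,z)=\nu(z)\}$. For $\delta\ge0$, $\mathcal{D}^{\delta}_{x,a}=\{\tilde{\mathcal{P}}_{x,a}\in\mathscr{M}(\mathcal{X}): W(\tilde{\mathcal{P}}_{x,a},\mathcal{P}_{x,a})\le\delta\}$ and $\mathscr{D}^{\delta}=\prod_{(x,a)\in H\times\mathcal{A}}\mathcal{D}^{\delta}_{x,a}$. The robust Q-function is $Q^{\delta,\mathscr{P}}_{\pi}(x,a)=\sup_{\tilde{\mathscr{P}}\in\mathscr{D}^{\delta}}\mathbb{E}^{\tilde{\mathscr{P}}}_{\pi}\big[\sum_{t=0}^{\tau-1}c_{t+1}\mid X_0=x,A_0=a\big]$, where $c_{t+1}=1$ if $X_{t+1}\in U$ and $0$ otherwise; by the same formula (empty sum, since $\tau=0$), $Q^{\delta,\mathscr{P}}_{\pi}(l,a')=0$ for terminal states $l\in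 E\cup U$. *)

theory Defs
  imports "HOL-Analysis.Analysis"
begin

definition is_dist :: "'b set \<Rightarrow> ('b \<Rightarrow> real) \<Rightarrow> bool" where
  "is_dist S \<mu> \<longleftrightarrow> (\<forall>y\<in>S. 0 \<le> \<mu> y) \<and> (\<Sum>y\<in>S. \<mu> y) = 1 \<and> (\<forall>y. y \<notin> S \<longrightarrow> \<mu> y = 0)"

definition couplings :: "real set \<Rightarrow> (real \<Rightarrow> real) \<Rightarrow> (real \<Rightarrow> real) \<Rightarrow> (real \<times> real \<Rightarrow> real) set" where
  "couplings X \<mu> \<nu> = {\<Gamma>. (\<forall>p\<in>X \<times> X. 0 \<le> \<Gamma> p)
      \<and> (\<forall>y\<in>X. (\<Sum>z\<in>X. \<Gamma> (y, z)) = \<mu> y)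
      \<and> (\<forall>z\<in>X. (\<Sum>y\<in>X. \<Gamma> (y, z)) = \<nu> z)}"

text \<open>1-Wasserstein distance (the minimum is attained; we write it as an infimum).\<close>
definition wasserstein :: "real set \<Rightarrow> (real \<Rightarrow> real) \<Rightarrow> (real \<Rightarrow> real) \<Rightarrow> real" where
  "wasserstein X \<mu> \<nu> = Inf ((\<lambda>\<Gamma>. \<Sum>p\<in>X \<times> X. \<Gamma> p * \<bar>fst p - snd p\<bar>) ` couplings X \<mu> \<nu>)"

definition ambiguity_set ::
  "real set \<Rightarrow> real set \<Rightarrow> 'a set \<Rightarrow> real \<Rightarrow> (real \<Rightarrow> 'a \<Rightarrow> real \<Rightarrow> real)
     \<Rightarrow> (real \<Rightarrow> 'a \<Rightarrow> real \<Rightarrow> real) set" where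
  "ambiguity_set X H A \<delta> P = {Pt. \<forall>x\<in>H. \<forall>a\<in>A.
       is_dist X (Pt x a) \<and> wasserstein X (Pt x a) (P x a) \<le> \<delta>}"

text \<open>Probability P(X_1=y_1,A_1=b_1,...,X_t=y_t,A_t=b_t,X_{t+1}=z | X_0=x, A_0=a)
  under kernel Pt and policy pi, where the list is [(y_1,b_1),...,(y_t,b_t)].\<close>
fun traj_prob :: "(real \<Rightarrow> 'a \<Rightarrow> real \<Rightarrow> real) \<Rightarrow> (real \<Rightarrow> 'a \<Rightarrow> real)
     \<Rightarrow> real \<Rightarrow> 'a \<Rightarrow> (real \<times> 'a) list \<Rightarrow> real \<Rightarrow> real" where
  "traj_prob Pt \<pi> x a [] z = Pt x a z"
| "traj_prob Pt \<pi> x a ((y, b) # rest) z = Pt x a y * \<pi> y b * traj_prob Pt \<pi> y b rest z"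

definition cost :: "real set \<Rightarrow> real \<Rightarrow> real" where
  "cost U l = (if l \<in> U then 1 else 0)"

text \<open>Truncated expected cost
  E^{Pt}_pi [ sum_{t < min(tau,n)} c_{t+1} | X_0 = x, A_0 = a ]
  = sum_{t<n} P(X_0,...,X_t in H, X_{t+1} in U | X_0 = x, A_0 = a),
  with H = X - (E u U), tau the hitting time of E u U.\<close>
definition exp_cost_trunc ::
  "real set \<Rightarrow> real set \<Rightarrow> real set \<Rightarrow> 'a set \<Rightarrow> (real \<Rightarrow> 'a \<Rightarrow> real \<Rightarrow> real)
     \<Rightarrow> (real \<Rightarrow> 'a \<Rightarrow> real) \<Rightarrow> real \<Rightarrow> 'a \<Rightarrow> nat \<Rightarrow> real" where
  "exp_cost_trunc X E U A Pt \<pi> x a n =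
     (let H = X - (E \<union> U) in
      \<Sum>t<n. if x \<in> H then
        (\<Sum>xs\<in>{xs. set xs \<subseteq> H \<times> A \<and> length xs = t}. \<Sum>z\<in>U. traj_prob Pt \<pi> x a xs z)
      else 0)"

definition exp_cost ::
  "real set \<Rightarrow> real set \<Rightarrow> real set \<Rightarrow> 'a set \<Rightarrow> (real \<Rightarrow> 'a \<Rightarrow> real \<Rightarrow> real)
     \<Rightarrow> (real \<Rightarrow> 'a \<Rightarrow> real) \<Rightarrow> real \<Rightarrow> 'a \<Rightarrow> real" where
  "exp_cost X E U A Pt \<pi> x a = (SUP n. exp_cost_trunc X E U A Pt \<pi> x a n)"

definition robustQ ::
  "real set \<Rightarrow> real set \<Rightarrow> real set \<Rightarrow> 'a set \<Rightarrow> real \<Rightarrow> (real \<Rightarrow> 'a \<Rightarrow> real \<Rightarrow> real)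
     \<Rightarrow> (real \<Rightarrow> 'a \<Rightarrow> real) \<Rightarrow> real \<Rightarrow> 'a \<Rightarrow> real" where
  "robustQ X E U A \<delta> P \<pi> x a =
     (SUP Pt\<in>ambiguity_set X (X - (E \<union> U)) A \<delta> P. exp_cost X E U A Pt \<pi> x a)"

end

theory Submission
  imports Defs
begin

text \<open>The robust Q-function is a fixed point of the robust Bellman operator \<open>T\<close>, where
  \<open>T w (x, a)\<close> is the largest expectation of \<open>c + \<Sum>a'. w(\<cdot>, a') \<pi>(a'|\<cdot>)\<close> under a measure in the
  Wasserstein ball around \<open>P x a\<close>. Value iteration \<open>T\<^sup>n 0\<close> dominates every truncated expected cost;
  conversely its discounted variant stays below \<open>Q\<close>, because against a sub-fixed point of the
  discounted operator a single nearly optimal stationary kernel can be fixed once and for all.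
  Letting the discount tend to 1 shows that \<open>T\<^sup>n 0\<close> increases to \<open>Q\<close>, whence \<open>Q = T Q\<close>.

  It remains to dualise the supremum defining \<open>T Q (x, a)\<close>. Weak duality follows by integrating
  the constraint on \<open>h\<close> against a nearly optimal coupling. For strong duality, the convex
  piecewise linear function \<open>g \<lambda> = \<lambda> \<delta> + \<Sum>\<^sub>y p y max\<^sub>l (f l - \<lambda> \<bar>l - y\<bar>)\<close> attains its minimum
  on \<open>[0, \<infinity>)\<close>. Its one-sided slopes there show that moving each \<open>y\<close> to its nearest maximiser
  costs at most \<open>\<delta>\<close> on average and, if \<open>\<lambda> > 0\<close>, moving it to its farthest maximiser costs at
  least \<open>\<delta>\<close>; a suitable mixture of the two transport maps is a feasible measure of value
  \<open>g \<lambda>\<close>.\<close>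

section \<open>Distributions and the Wasserstein distance\<close>

lemma is_dist_nonneg: "is_dist S \<mu> \<Longrightarrow> y \<in> S \<Longrightarrow> 0 \<le> \<mu> y"
  by (simp add: is_dist_def)

lemma is_dist_finite: "is_dist S \<mu> \<Longrightarrow> finite S"
  by (metis is_dist_def sum.infinite zero_neq_one)

lemma is_dist_sum_const: "is_dist S \<mu> \<Longrightarrow> (\<Sum>l\<in>S. \<mu> l * c) = c"
  by (simp add: is_dist_def sum_distrib_right[symmetric])

lemma is_dist_sum_mono:
  assumes "is_dist S \<mu>" and "\<And>l. l \<in> S \<Longrightarrow> g l \<le> g' l"
  shows "(\<Sum>l\<in>S. \<mu> l * g l) \<le> (\<Sum>l\<in>S. \<mu> l * g' l)"
  using assms by (intro sum_mono mult_left_mono) (auto simp: is_dist_def)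

lemma is_dist_sum_le:
  assumes "is_dist S \<mu>" and "\<And>l. l \<in> S \<Longrightarrow> g l \<le> c"
  shows "(\<Sum>l\<in>S. \<mu> l * g l) \<le> c"
  using is_dist_sum_mono[OF assms] is_dist_sum_const[OF assms(1)] by simp

lemma is_dist_sum_ge:
  assumes "is_dist S \<mu>" and "\<And>l. l \<in> S \<Longrightarrow> c \<le> g l"
  shows "c \<le> (\<Sum>l\<in>S. \<mu> l * g l)"
  using is_dist_sum_mono[OF assms] is_dist_sum_const[OF assms(1)] by simp

lemma bdd_above_expectations:
  assumes "finite S" and "M \<subseteq> {\<mu>. is_dist S \<mu>}"
  shows "bdd_above ((\<lambda>\<mu>. \<Sum>l\<in>S. \<mu> l * g l) ` M)"
  using assms by (intro bdd_aboveI[where M = "Max (g ` S)"]) (auto intro!: is_dist_sum_le)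

lemma wasserstein_le_coupling_cost:
  assumes "\<Gamma> \<in> couplings X \<mu> \<nu>"
  shows "wasserstein X \<mu> \<nu> \<le> (\<Sum>q\<in>X \<times> X. \<Gamma> q * \<bar>fst q - snd q\<bar>)"
  unfolding wasserstein_def using assms
  by (intro cInf_lower) (auto intro!: bdd_belowI[where m = 0] sum_nonneg simp: couplings_def)

lemma product_coupling:
  assumes "is_dist X \<mu>" and "is_dist X \<nu>"
  shows "(\<lambda>q. \<mu> (fst q) * \<nu> (snd q)) \<in> couplings X \<mu> \<nu>"
  using assms
  by (auto simp: couplings_def is_dist_def sum_distrib_left[symmetric] sum_distrib_right[symmetric])

lemma exists_coupling_cost_less:
  assumes "is_dist X \<mu>" and "is_dist X \<nu>" and "wasserstein X \<mu> \<nu> < c"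
  shows "\<exists>\<Gamma>\<in>couplings X \<mu> \<nu>. (\<Sum>q\<in>X \<times> X. \<Gamma> q * \<bar>fst q - snd q\<bar>) < c"
proof -
  let ?cost = "\<lambda>\<Gamma>. \<Sum>q\<in>X \<times> X. \<Gamma> q * \<bar>fst q - snd q\<bar>"
  have "bdd_below (?cost ` couplings X \<mu> \<nu>)"
    by (auto intro!: bdd_belowI[where m = 0] sum_nonneg simp: couplings_def)
  moreover have "?cost ` couplings X \<mu> \<nu> \<noteq> {}"
    using product_coupling[OF assms(1,2)] by blast
  ultimately show ?thesis
    using assms(3) by (simp add: wasserstein_def cInf_less_iff)
qed

lemma wasserstein_self_nonpos:
  assumes "is_dist X p"
  shows "wasserstein X p p \<le> 0"
proof -
  let ?\<Gamma> = "\<lambda>q. if fst q = snd q then p (fst q) else 0"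
  have "?\<Gamma> \<in> couplings X p p"
    using assms is_dist_finite[OF assms] by (auto simp: couplings_def is_dist_def)
  then have "wasserstein X p p \<le> (\<Sum>q\<in>X \<times> X. ?\<Gamma> q * \<bar>fst q - snd q\<bar>)"
    by (rule wasserstein_le_coupling_cost)
  also have "\<dots> = 0"
    by (intro sum.neutral) auto
  finally show ?thesis .
qed

lemma kernel_coupling:
  assumes p: "is_dist X p" and K: "\<And>y. y \<in> X \<Longrightarrow> is_dist X (K y)"
  shows "is_dist X (\<lambda>l. \<Sum>y\<in>X. p y * K y l)"
    and "wasserstein X (\<lambda>l. \<Sum>y\<in>X. p y * K y l) p \<le> (\<Sum>y\<in>X. p y * (\<Sum>l\<in>X. K y l * \<bar>l - y\<bar>))"
    and "(\<Sum>l\<in>X. (\<Sum>y\<in>X. p y * K y l) * f l) = (\<Sum>y\<in>X. p y * (\<Sum>l\<in>X. K y l * f l))"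
proof -
  let ?\<mu> = "\<lambda>l. \<Sum>y\<in>X. p y * K y l"
  have swap: "(\<Sum>l\<in>X. ?\<mu> l * g l) = (\<Sum>y\<in>X. p y * (\<Sum>l\<in>X. K y l * g l))" for g
  proof -
    have "(\<Sum>l\<in>X. ?\<mu> l * g l) = (\<Sum>l\<in>X. \<Sum>y\<in>X. p y * (K y l * g l))"
      by (simp add: sum_distrib_right mult.assoc)
    also have "\<dots> = (\<Sum>y\<in>X. \<Sum>l\<in>X. p y * (K y l * g l))"
      by (rule sum.swap)
    finally show ?thesis
      by (simp add: sum_distrib_left)
  qed
  show "(\<Sum>l\<in>X. ?\<mu> l * f l) = (\<Sum>y\<in>X. p y * (\<Sum>l\<in>X. K y l * f l))"
    by (rule swap)
  have "(\<Sum>l\<in>X. ?\<mu> l) = 1"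
    using swap[of "\<lambda>_. 1"] p K by (simp add: is_dist_def)
  then show "is_dist X ?\<mu>"
    using p K by (auto simp: is_dist_def intro!: sum_nonneg)
  have coupling: "(\<lambda>q. K (snd q) (fst q) * p (snd q)) \<in> couplings X ?\<mu> p"
    using p K by (auto simp: couplings_def is_dist_def mult.commute sum_distrib_left[symmetric])
  have cost: "(\<Sum>q\<in>X \<times> X. K (snd q) (fst q) * p (snd q) * \<bar>fst q - snd q\<bar>)
      = (\<Sum>y\<in>X. p y * (\<Sum>l\<in>X. K y l * \<bar>l - y\<bar>))"
  proof -
    have "(\<Sum>q\<in>X \<times> X. K (snd q) (fst q) * p (snd q) * \<bar>fst q - snd q\<bar>)
        = (\<Sum>l\<in>X. \<Sum>y\<in>X. p y * (K y l * \<bar>l - y\<bar>))"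
      by (simp add: sum.cartesian_product case_prod_beta mult_ac)
    also have "\<dots> = (\<Sum>y\<in>X. \<Sum>l\<in>X. p y * (K y l * \<bar>l - y\<bar>))"
      by (rule sum.swap)
    finally show ?thesis
      by (simp add: sum_distrib_left)
  qed
  show "wasserstein X ?\<mu> p \<le> (\<Sum>y\<in>X. p y * (\<Sum>l\<in>X. K y l * \<bar>l - y\<bar>))"
    using wasserstein_le_coupling_cost[OF coupling] unfolding cost .
qed

definition two_point :: "real \<Rightarrow> 'b \<Rightarrow> 'b \<Rightarrow> 'b \<Rightarrow> real" where
  "two_point \<theta> u v = (\<lambda>l. (if l = u then \<theta> else 0) + (if l = v then 1 - \<theta> else 0))"

lemma sum_two_point:
  assumes "finite S" and "u \<in> S" and "v \<in> S"
  shows "(\<Sum>l\<in>S. two_point \<theta> u v l * g l) = \<theta> * g u + (1 - \<theta>) * g v"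
proof -
  have "(\<Sum>l\<in>S. two_point \<theta> u v l * g l)
      = (\<Sum>l\<in>S. if l = u then \<theta> * g l else 0) + (\<Sum>l\<in>S. if l = v then (1 - \<theta>) * g l else 0)"
    unfolding two_point_def distrib_right sum.distrib by (intro arg_cong2[where f = "(+)"] sum.cong) auto
  then show ?thesis
    using assms by (simp add: sum.delta')
qed

lemma is_dist_two_point:
  assumes "finite S" and "u \<in> S" and "v \<in> S" and "0 \<le> \<theta>" and "\<theta> \<le> 1"
  shows "is_dist S (two_point \<theta> u v)"
  using assms sum_two_point[OF assms(1-3), of \<theta> "\<lambda>_. 1"] by (auto simp: is_dist_def two_point_def)

lemma wasserstein_weak_duality:
  assumes mu: "is_dist X \<mu>" and p: "is_dist X p" and W: "wasserstein X \<mu> p \<le> \<delta>"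
    and lam: "lam \<ge> 0" and h: "\<forall>y\<in>X. Max ((\<lambda>l. - lam * \<bar>l - y\<bar> + f l) ` X) \<le> h y"
  shows "(\<Sum>l\<in>X. \<mu> l * f l) \<le> lam * \<delta> + (\<Sum>y\<in>X. h y * p y)"
proof (rule field_le_epsilon)
  fix e :: real
  assume e: "e > 0"
  then have "wasserstein X \<mu> p < \<delta> + e / (lam + 1)"
    using W lam by (smt (verit) divide_pos_pos)
  then obtain \<Gamma> where \<Gamma>: "\<Gamma> \<in> couplings X \<mu> p"
    and cost: "(\<Sum>q\<in>X \<times> X. \<Gamma> q * \<bar>fst q - snd q\<bar>) < \<delta> + e / (lam + 1)"
    using exists_coupling_cost_less[OF mu p] by blast
  have fin: "finite X"
    using is_dist_finite[OF p] .
  have \<Gamma>_nonneg: "0 \<le> \<Gamma> (l, y)" if "l \<in> X" "y \<in> X" for l y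
    using \<Gamma> that by (auto simp: couplings_def)
  have pointwise: "- lam * \<bar>l - y\<bar> + f l \<le> h y" if "l \<in> X" "y \<in> X" for l y
    using h that fin by (meson Max_ge finite_imageI image_eqI order_trans)
  have "(\<Sum>l\<in>X. \<mu> l * f l) = (\<Sum>l\<in>X. \<Sum>y\<in>X. \<Gamma> (l, y) * f l)"
    using \<Gamma> by (auto simp: couplings_def sum_distrib_right[symmetric] intro!: sum.cong)
  also have "\<dots> = (\<Sum>l\<in>X. \<Sum>y\<in>X. \<Gamma> (l, y) * (- lam * \<bar>l - y\<bar> + f l))
      + lam * (\<Sum>q\<in>X \<times> X. \<Gamma> q * \<bar>fst q - snd q\<bar>)"
    by (simp add: sum.cartesian_product case_prod_beta sum_distrib_left algebra_simps
        sum.distrib sum_subtractf)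
  also have "\<dots> \<le> (\<Sum>l\<in>X. \<Sum>y\<in>X. \<Gamma> (l, y) * h y) + lam * (\<delta> + e / (lam + 1))"
    using cost lam pointwise \<Gamma>_nonneg
    by (intro add_mono sum_mono mult_left_mono) auto
  also have "(\<Sum>l\<in>X. \<Sum>y\<in>X. \<Gamma> (l, y) * h y) = (\<Sum>y\<in>X. h y * p y)"
  proof (subst sum.swap, intro sum.cong refl)
    fix y
    assume "y \<in> X"
    have "(\<Sum>l\<in>X. \<Gamma> (l, y) * h y) = (\<Sum>l\<in>X. \<Gamma> (l, y)) * h y"
      by (rule sum_distrib_right[symmetric])
    then show "(\<Sum>l\<in>X. \<Gamma> (l, y) * h y) = h y * p y"
      using \<Gamma> \<open>y \<in> X\<close> by (simp add: couplings_def)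
  qed
  also have "lam * (\<delta> + e / (lam + 1)) \<le> lam * \<delta> + e"
    using lam e by (simp add: field_simps)
  finally show "(\<Sum>l\<in>X. \<mu> l * f l) \<le> lam * \<delta> + (\<Sum>y\<in>X. h y * p y) + e"
    by simp
qed

section \<open>Duality for the Wasserstein ball\<close>

lemma eventually_affine_less:
  fixes a b c d :: real
  assumes "a < c"
  shows "\<forall>\<^sub>F t in at_right 0. a + t * b < c + t * d"
proof -
  have "((\<lambda>t. a + t * b - (c + t * d)) \<longlongrightarrow> a - c) (at_right 0)"
    by (auto intro!: tendsto_eq_intros)
  then have "\<forall>\<^sub>F t in at_right 0. a + t * b - (c + t * d) < 0"
    using assms by (intro order_tendstoD(2)) auto
  then show ?thesis
    by eventually_elim simp
qed

text \<open>For small \<open>t\<close> only the maximisers of \<open>c\<close> compete.\<close>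

lemma eventually_Max_affine:
  fixes c k :: "'b \<Rightarrow> real"
  assumes "finite L" and "L \<noteq> {}"
  shows "\<forall>\<^sub>F t in at_right 0. Max ((\<lambda>l. c l + t * k l) ` L)
           = Max (c ` L) + t * Max (k ` {l\<in>L. c l = Max (c ` L)})"
proof -
  define M where "M = Max (c ` L)"
  define L0 where "L0 = {l\<in>L. c l = M}"
  define K where "K = Max (k ` L0)"
  have "M \<in> c ` L"
    using assms by (simp add: M_def)
  then have L0: "finite L0" "L0 \<noteq> {}"
    using assms(1) by (auto simp: L0_def)
  then obtain l0 where l0: "l0 \<in> L0" "k l0 = K"
    by (metis (mono_tags) K_def Max_in finite_imageI image_iff image_is_empty)
  have "\<forall>\<^sub>F t in at_right 0. c l + t * k l \<le> M + t * K" if "l \<in> L" for l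
  proof (cases "l \<in> L0")
    case True
    then have "c l = M" and "k l \<le> K"
      using L0 by (simp_all add: L0_def K_def)
    from eventually_at_right_less[of 0] show ?thesis
      by eventually_elim (use \<open>c l = M\<close> \<open>k l \<le> K\<close> in \<open>simp add: mult_left_mono\<close>)
  next
    case False
    then have "c l < M"
      using assms(1) that by (auto simp: L0_def M_def order_less_le)
    then show ?thesis
      by (rule eventually_mono[OF eventually_affine_less[where b = "k l" and d = K]]) simp
  qed
  then have "\<forall>\<^sub>F t in at_right 0. \<forall>l\<in>L. c l + t * k l \<le> M + t * K"
    using assms(1) by (intro eventually_ball_finite) auto
  then have "\<forall>\<^sub>F t in at_right 0. Max ((\<lambda>l. c l + t * k l) ` L) = M + t * K"
  proof eventually_elim
    case (elim t)
    show ?case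
      using elim l0 assms(1) by (intro Max_eqI) (auto simp: L0_def)
  qed
  then show ?thesis
    by (simp add: M_def K_def L0_def)
qed

lemma continuous_on_Max_image:
  fixes \<phi> :: "'b \<Rightarrow> 'c::topological_space \<Rightarrow> 'd::linorder_topology"
  assumes "finite L" and "L \<noteq> {}" and "\<And>l. l \<in> L \<Longrightarrow> continuous_on S (\<phi> l)"
  shows "continuous_on S (\<lambda>t. Max ((\<lambda>l. \<phi> l t) ` L))"
  using assms
proof (induction L rule: finite_ne_induct)
  case (insert l L)
  then have "continuous_on S (\<phi> l)" and "continuous_on S (\<lambda>t. Max ((\<lambda>l. \<phi> l t) ` L))"
    by auto
  then have "continuous_on S (\<lambda>t. max (\<phi> l t) (Max ((\<lambda>l. \<phi> l t) ` L)))"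
    by (rule continuous_on_max)
  then show ?case
    using insert.hyps by simp
qed simp

lemma exists_mixing_weight:
  fixes a b \<delta> lam :: real
  assumes "a \<le> \<delta>" and "a \<le> b" and "0 \<le> lam" and "0 < lam \<Longrightarrow> \<delta> \<le> b"
  shows "\<exists>\<theta>. 0 \<le> \<theta> \<and> \<theta> \<le> 1 \<and> \<theta> * a + (1 - \<theta>) * b \<le> \<delta> \<and> lam * (\<theta> * a + (1 - \<theta>) * b) = lam * \<delta>"
proof (cases "lam = 0 \<or> a = b")
  case True
  then have "lam * a = lam * \<delta>"
    using assms by (auto simp: less_eq_real_def)
  then show ?thesis
    using assms(1) by (intro exI[of _ 1]) simp
next
  case False
  then have "a < b" and "\<delta> \<le> b"
    using assms by (auto simp: less_eq_real_def)
  define \<theta> where "\<theta> = (b - \<delta>) / (b - a)"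
  have "\<theta> * (b - a) = b - \<delta>"
    using \<open>a < b\<close> by (simp add: \<theta>_def)
  moreover have "\<theta> * a + (1 - \<theta>) * b = b - \<theta> * (b - a)"
    by (simp add: algebra_simps)
  moreover have "0 \<le> \<theta>" and "\<theta> \<le> 1"
    using \<open>a < b\<close> \<open>\<delta> \<le> b\<close> assms(1) by (auto simp: \<theta>_def)
  ultimately show ?thesis
    by (intro exI[of _ \<theta>]) auto
qed

locale wasserstein_dual =
  fixes X :: "real set" and p f :: "real \<Rightarrow> real" and \<delta> :: real
  assumes dist_p: "is_dist X p" and delta_nonneg: "\<delta> \<ge> 0"
begin

lemma finite_X: "finite X"
  using is_dist_finite[OF dist_p] .

lemma X_nonempty: "X \<noteq> {}"
  using dist_p by (auto simp: is_dist_def)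

lemma p_nonneg: "y \<in> X \<Longrightarrow> 0 \<le> p y"
  using is_dist_nonneg[OF dist_p] .

definition dual_max :: "real \<Rightarrow> real \<Rightarrow> real" where
  "dual_max lam y = Max ((\<lambda>l. - lam * \<bar>l - y\<bar> + f l) ` X)"

definition dual_obj :: "real \<Rightarrow> real" where
  "dual_obj lam = lam * \<delta> + (\<Sum>y\<in>X. dual_max lam y * p y)"

definition maximizers :: "real \<Rightarrow> real \<Rightarrow> real set" where
  "maximizers lam y = {l\<in>X. - lam * \<bar>l - y\<bar> + f l = dual_max lam y}"

definition nearest_dist :: "real \<Rightarrow> real \<Rightarrow> real" where
  "nearest_dist lam y = Min ((\<lambda>l. \<bar>l - y\<bar>) ` maximizers lam y)"

definition farthest_dist :: "real \<Rightarrow> real \<Rightarrow> real" where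
  "farthest_dist lam y = Max ((\<lambda>l. \<bar>l - y\<bar>) ` maximizers lam y)"

definition nearest_cost :: "real \<Rightarrow> real" where
  "nearest_cost lam = (\<Sum>y\<in>X. nearest_dist lam y * p y)"

definition farthest_cost :: "real \<Rightarrow> real" where
  "farthest_cost lam = (\<Sum>y\<in>X. farthest_dist lam y * p y)"

lemma maximizers_nonempty: "maximizers lam y \<noteq> {}"
proof -
  have "dual_max lam y \<in> (\<lambda>l. - lam * \<bar>l - y\<bar> + f l) ` X"
    unfolding dual_max_def using finite_X X_nonempty by (intro Max_in) auto
  then show ?thesis
    by (auto simp: maximizers_def)
qed

lemma finite_maximizers: "finite (maximizers lam y)"
  using finite_X by (simp add: maximizers_def)

lemma nearest_le_farthest: "nearest_dist lam y \<le> farthest_dist lam y"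
proof -
  obtain l where "l \<in> maximizers lam y"
    using maximizers_nonempty by blast
  then have "nearest_dist lam y \<le> \<bar>l - y\<bar>" and "\<bar>l - y\<bar> \<le> farthest_dist lam y"
    unfolding nearest_dist_def farthest_dist_def using finite_maximizers by simp_all
  then show ?thesis
    by linarith
qed

lemma nearest_cost_le_farthest_cost: "nearest_cost lam \<le> farthest_cost lam"
  unfolding nearest_cost_def farthest_cost_def
  using nearest_le_farthest p_nonneg by (intro sum_mono mult_right_mono) auto

lemma exists_nearest_maximizer: "\<exists>l\<in>maximizers lam y. \<bar>l - y\<bar> = nearest_dist lam y"
proof -
  have "nearest_dist lam y \<in> (\<lambda>l. \<bar>l - y\<bar>) ` maximizers lam y"
    unfolding nearest_dist_def using finite_maximizers maximizers_nonempty by simp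
  then show ?thesis
    by force
qed

lemma exists_farthest_maximizer: "\<exists>l\<in>maximizers lam y. \<bar>l - y\<bar> = farthest_dist lam y"
proof -
  have "farthest_dist lam y \<in> (\<lambda>l. \<bar>l - y\<bar>) ` maximizers lam y"
    unfolding farthest_dist_def using finite_maximizers maximizers_nonempty by simp
  then show ?thesis
    by force
qed

lemma eventually_dual_max_right:
  "\<forall>\<^sub>F t in at_right 0. dual_max (lam + t) y = dual_max lam y - t * nearest_dist lam y"
  using eventually_Max_affine[OF finite_X X_nonempty,
      of "\<lambda>l. - lam * \<bar>l - y\<bar> + f l" "\<lambda>l. - \<bar>l - y\<bar>"]
proof eventually_elim
  case (elim t)
  have "Max ((\<lambda>l. - \<bar>l - y\<bar>) ` maximizers lam y) = - nearest_dist lam y"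
    using finite_maximizers maximizers_nonempty
    by (simp add: nearest_dist_def image_image)
  then show ?case
    using elim by (simp add: dual_max_def maximizers_def algebra_simps)
qed

lemma eventually_dual_max_left:
  "\<forall>\<^sub>F t in at_right 0. dual_max (lam - t) y = dual_max lam y + t * farthest_dist lam y"
  using eventually_Max_affine[OF finite_X X_nonempty,
      of "\<lambda>l. - lam * \<bar>l - y\<bar> + f l" "\<lambda>l. \<bar>l - y\<bar>"]
proof eventually_elim
  case (elim t)
  then show ?case
    by (simp add: dual_max_def maximizers_def farthest_dist_def algebra_simps)
qed

lemma eventually_dual_obj_right:
  "\<forall>\<^sub>F t in at_right 0. dual_obj (lam + t) = dual_obj lam + t * (\<delta> - nearest_cost lam)"
proof -
  have "\<forall>\<^sub>F t in at_right 0. \<forall>y\<in>X. dual_max (lam + t) y = dual_max lam y - t * nearest_dist lam y"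
    using finite_X eventually_dual_max_right by (intro eventually_ball_finite) auto
  then show ?thesis
  proof eventually_elim
    case (elim t)
    then have "(\<Sum>y\<in>X. dual_max (lam + t) y * p y)
        = (\<Sum>y\<in>X. dual_max lam y * p y - t * (nearest_dist lam y * p y))"
      by (intro sum.cong refl) (simp add: elim algebra_simps)
    then show ?case
      by (simp add: dual_obj_def nearest_cost_def sum_subtractf sum_distrib_left algebra_simps)
  qed
qed

lemma eventually_dual_obj_left:
  "\<forall>\<^sub>F t in at_right 0. dual_obj (lam - t) = dual_obj lam - t * (\<delta> - farthest_cost lam)"
proof -
  have "\<forall>\<^sub>F t in at_right 0. \<forall>y\<in>X. dual_max (lam - t) y = dual_max lam y + t * farthest_dist lam y"
    using finite_X eventually_dual_max_left by (intro eventually_ball_finite) auto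
  then show ?thesis
  proof eventually_elim
    case (elim t)
    then have "(\<Sum>y\<in>X. dual_max (lam - t) y * p y)
        = (\<Sum>y\<in>X. dual_max lam y * p y + t * (farthest_dist lam y * p y))"
      by (intro sum.cong refl) (simp add: elim algebra_simps)
    then show ?case
      by (simp add: dual_obj_def farthest_cost_def sum.distrib sum_distrib_left algebra_simps)
  qed
qed

lemma continuous_dual_obj: "continuous_on S dual_obj"
  unfolding dual_obj_def dual_max_def
  using finite_X X_nonempty
  by (intro continuous_intros continuous_on_Max_image) auto

text \<open>The diagonal contributes \<open>0\<close> by the convention \<open>x / 0 = 0\<close>.\<close>

definition max_slope :: real where
  "max_slope = Max ((\<lambda>q. (f (fst q) - f (snd q)) / \<bar>fst q - snd q\<bar>) ` (X \<times> X))"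

lemma slope_le_max_slope: "l \<in> X \<Longrightarrow> y \<in> X \<Longrightarrow> (f l - f y) / \<bar>l - y\<bar> \<le> max_slope"
  unfolding max_slope_def using finite_X by (intro Max_ge) force+

lemma max_slope_nonneg: "0 \<le> max_slope"
  using slope_le_max_slope X_nonempty by fastforce

lemma dual_max_beyond_max_slope:
  assumes y: "y \<in> X" and lam: "max_slope \<le> lam"
  shows "dual_max lam y = f y"
  unfolding dual_max_def
proof (rule Max_eqI)
  show "finite ((\<lambda>l. - lam * \<bar>l - y\<bar> + f l) ` X)"
    using finite_X by simp
  show "f y \<in> (\<lambda>l. - lam * \<bar>l - y\<bar> + f l) ` X"
    using y by force
next
  fix v
  assume "v \<in> (\<lambda>l. - lam * \<bar>l - y\<bar> + f l) ` X"
  then obtain l where l: "l \<in> X" and v: "v = - lam * \<bar>l - y\<bar> + f l"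
    by blast
  show "v \<le> f y"
  proof (cases "l = y")
    case False
    then have "(f l - f y) / \<bar>l - y\<bar> \<le> lam"
      using slope_le_max_slope[OF l y] lam by linarith
    then show ?thesis
      using False v by (simp add: pos_divide_le_eq)
  qed (use v in simp)
qed

lemma dual_obj_attains_min: "\<exists>lam\<ge>0. \<forall>lam'\<ge>0. dual_obj lam \<le> dual_obj lam'"
proof -
  obtain lam where lam: "lam \<in> {0..max_slope}" and min: "\<forall>l\<in>{0..max_slope}. dual_obj lam \<le> dual_obj l"
    using continuous_attains_inf[of "{0..max_slope}" dual_obj] continuous_dual_obj max_slope_nonneg
    by auto
  have "dual_obj lam \<le> dual_obj l" if "l \<ge> 0" for l
  proof (cases "l \<le> max_slope")
    case False
    have affine: "dual_obj l' = l' * \<delta> + (\<Sum>y\<in>X. f y * p y)" if "max_slope \<le> l'" for l'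
      unfolding dual_obj_def using dual_max_beyond_max_slope that by simp
    have "dual_obj lam \<le> dual_obj max_slope"
      using min max_slope_nonneg by simp
    also have "\<dots> \<le> dual_obj l"
      using affine[of max_slope] affine[of l] False delta_nonneg by (simp add: mult_right_mono)
    finally show ?thesis .
  qed (use min that in simp)
  then show ?thesis
    using lam by auto
qed

lemma exists_optimal_multiplier:
  "\<exists>lam\<ge>0. nearest_cost lam \<le> \<delta> \<and> (0 < lam \<longrightarrow> \<delta> \<le> farthest_cost lam)"
proof -
  obtain lam where lam: "lam \<ge> 0" and min: "\<And>lam'. lam' \<ge> 0 \<Longrightarrow> dual_obj lam \<le> dual_obj lam'"
    using dual_obj_attains_min by blast
  have "\<forall>\<^sub>F t in at_right 0. 0 < t \<and> dual_obj lam \<le> dual_obj lam + t * (\<delta> - nearest_cost lam)"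
    using eventually_at_right_less eventually_dual_obj_right[of lam]
  proof eventually_elim
    case (elim t)
    then show ?case
      using min[of "lam + t"] lam by simp
  qed
  from eventually_happens'[OF trivial_limit_at_right_real this]
  obtain t where "0 < t" "0 \<le> t * (\<delta> - nearest_cost lam)"
    by auto
  then have "nearest_cost lam \<le> \<delta>"
    by (simp add: zero_le_mult_iff)
  moreover have "\<delta> \<le> farthest_cost lam" if "0 < lam"
  proof -
    have "\<forall>\<^sub>F t in at_right 0. t < lam"
      using that by (simp add: eventually_at_right_field) (use that in blast)
    with eventually_at_right_less eventually_dual_obj_left[of lam]
    have "\<forall>\<^sub>F t in at_right 0. 0 < t \<and> dual_obj lam \<le> dual_obj lam - t * (\<delta> - farthest_cost lam)"
    proof eventually_elim
      case (elim t)
      then show ?case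
        using min[of "lam - t"] by simp
    qed
    from eventually_happens'[OF trivial_limit_at_right_real this]
    obtain t where "0 < t" "t * (\<delta> - farthest_cost lam) \<le> 0"
      by auto
    then show ?thesis
      by (simp add: mult_le_0_iff)
  qed
  ultimately show ?thesis
    using lam by blast
qed

text \<open>Complementary slackness: mixing the nearest and the farthest maximisers of the optimal
  multiplier in suitable proportions spends the transport budget exactly, unless the
  multiplier vanishes.\<close>

lemma strong_duality:
  "\<exists>\<mu> lam. is_dist X \<mu> \<and> wasserstein X \<mu> p \<le> \<delta> \<and> lam \<ge> 0 \<and> (\<Sum>l\<in>X. \<mu> l * f l) = dual_obj lam"
proof -
  obtain lam where lam: "lam \<ge> 0" "nearest_cost lam \<le> \<delta>" "0 < lam \<Longrightarrow> \<delta> \<le> farthest_cost lam"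
    using exists_optimal_multiplier by blast
  define a b where "a = nearest_cost lam" and "b = farthest_cost lam"
  obtain \<theta> where \<theta>: "0 \<le> \<theta>" "\<theta> \<le> 1" "\<theta> * a + (1 - \<theta>) * b \<le> \<delta>"
    and slack: "lam * (\<theta> * a + (1 - \<theta>) * b) = lam * \<delta>"
    using exists_mixing_weight[of a \<delta> b lam] lam nearest_cost_le_farthest_cost[of lam]
    by (auto simp: a_def b_def)
  obtain ln where ln: "\<And>y. ln y \<in> maximizers lam y \<and> \<bar>ln y - y\<bar> = nearest_dist lam y"
    using exists_nearest_maximizer by metis
  obtain lf where lf: "\<And>y. lf y \<in> maximizers lam y \<and> \<bar>lf y - y\<bar> = farthest_dist lam y"
    using exists_farthest_maximizer by metis
  have ln_X: "ln y \<in> X" and lf_X: "lf y \<in> X" for y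
    using ln lf by (auto simp: maximizers_def)
  define K where "K y = two_point \<theta> (ln y) (lf y)" for y
  have K_sum: "(\<Sum>l\<in>X. K y l * g l) = \<theta> * g (ln y) + (1 - \<theta>) * g (lf y)" for y g
    unfolding K_def using finite_X ln_X lf_X by (rule sum_two_point)
  have "is_dist X (K y)" for y
    unfolding K_def using finite_X ln_X lf_X \<theta>(1,2) by (rule is_dist_two_point)
  note coupling = kernel_coupling[where K = K, OF dist_p this]
  define \<mu> where "\<mu> = (\<lambda>l. \<Sum>y\<in>X. p y * K y l)"
  have mix: "(\<Sum>y\<in>X. p y * (\<theta> * nearest_dist lam y + (1 - \<theta>) * farthest_dist lam y))
      = \<theta> * a + (1 - \<theta>) * b"
  proof -
    have "(\<Sum>y\<in>X. p y * (\<theta> * nearest_dist lam y + (1 - \<theta>) * farthest_dist lam y))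
        = (\<Sum>y\<in>X. \<theta> * (nearest_dist lam y * p y) + (1 - \<theta>) * (farthest_dist lam y * p y))"
      by (intro sum.cong refl) (simp add: algebra_simps)
    then show ?thesis
      by (simp add: a_def b_def nearest_cost_def farthest_cost_def sum.distrib sum_distrib_left)
  qed
  have "wasserstein X \<mu> p \<le> \<delta>"
    using coupling(2) ln lf mix \<theta>(3) by (simp add: \<mu>_def K_sum)
  have "f (ln y) = dual_max lam y + lam * nearest_dist lam y"
    and "f (lf y) = dual_max lam y + lam * farthest_dist lam y" for y
    using ln[of y] lf[of y] by (auto simp: maximizers_def algebra_simps)
  then have "(\<Sum>l\<in>X. \<mu> l * f l)
      = (\<Sum>y\<in>X. dual_max lam y * p y
          + lam * (p y * (\<theta> * nearest_dist lam y + (1 - \<theta>) * farthest_dist lam y)))"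
    unfolding \<mu>_def coupling(3) K_sum by (intro sum.cong refl) (simp add: algebra_simps)
  also have "\<dots> = dual_obj lam"
    using slack by (simp add: dual_obj_def sum.distrib mix flip: sum_distrib_left)
  finally show ?thesis
    using coupling(1) \<open>wasserstein X \<mu> p \<le> \<delta>\<close> lam(1) unfolding \<mu>_def by blast
qed

theorem duality:
  "(SUP \<mu>\<in>{\<mu>. is_dist X \<mu> \<and> wasserstein X \<mu> p \<le> \<delta>}. \<Sum>l\<in>X. \<mu> l * f l) =
   Inf {lam * \<delta> + (\<Sum>y\<in>X. h y * p y) | lam h. lam \<ge> 0 \<and>
          (\<forall>y\<in>X. Max ((\<lambda>l. - lam * \<bar>l - y\<bar> + f l) ` X) \<le> h y)}"
  (is "Sup (?F ` ?B) = Inf ?D")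
proof -
  obtain \<mu>0 lam0 where \<mu>0: "\<mu>0 \<in> ?B" and "lam0 \<ge> 0" and val: "?F \<mu>0 = dual_obj lam0"
    using strong_duality by blast
  have dual_in: "dual_obj lam0 \<in> ?D"
    using \<open>lam0 \<ge> 0\<close>
    by (intro CollectI exI[of _ lam0] exI[of _ "dual_max lam0"]) (simp add: dual_obj_def dual_max_def)
  have weak: "?F \<mu> \<le> d" if "\<mu> \<in> ?B" and "d \<in> ?D" for \<mu> d
    using that wasserstein_weak_duality[OF _ dist_p] by blast
  have "Sup (?F ` ?B) \<le> Inf ?D"
    using \<mu>0 dual_in weak by (intro cSUP_least cInf_greatest) auto
  moreover have "Inf ?D \<le> Sup (?F ` ?B)"
  proof -
    have "Inf ?D \<le> dual_obj lam0"
      using dual_in weak[OF \<mu>0] by (intro cInf_lower bdd_belowI) auto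
    also have "\<dots> \<le> Sup (?F ` ?B)"
      using \<mu>0 dual_in weak unfolding val[symmetric] by (intro cSUP_upper bdd_aboveI) auto
    finally show ?thesis .
  qed
  ultimately show ?thesis
    by (rule antisym)
qed

end

section \<open>The robust Bellman equation\<close>

lemma le_of_power_mult_le:
  fixes u q :: real
  assumes "\<And>\<gamma>. 0 < \<gamma> \<Longrightarrow> \<gamma> < 1 \<Longrightarrow> \<gamma> ^ n * u \<le> q"
  shows "u \<le> q"
proof -
  have "((\<lambda>\<gamma>. \<gamma> ^ n * u) \<longlongrightarrow> 1 ^ n * u) (at_left 1)"
    by (intro tendsto_intros)
  moreover have "\<forall>\<^sub>F \<gamma> in at_left (1::real). \<gamma> \<in> {0<..<1}"
    by (rule eventually_at_left_real) simp
  then have "\<forall>\<^sub>F \<gamma> in at_left (1::real). \<gamma> ^ n * u \<le> q"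
    by eventually_elim (use assms in auto)
  ultimately have "1 ^ n * u \<le> q"
    by (rule tendsto_upperbound) simp
  then show ?thesis
    by simp
qed

lemma cost_nonneg: "0 \<le> cost U l"
  by (simp add: cost_def)

lemma cost_le_1: "cost U l \<le> 1"
  by (simp add: cost_def)

locale robust_mdp =
  fixes X E U :: "real set" and A :: "'a set" and \<delta> :: real
    and P :: "real \<Rightarrow> 'a \<Rightarrow> real \<Rightarrow> real" and \<pi> :: "real \<Rightarrow> 'a \<Rightarrow> real"
  assumes finite_X: "finite X" and finite_A: "finite A" and U_subset: "U \<subseteq> X"
    and delta_nonneg: "\<delta> \<ge> 0"
    and dist_P: "\<And>y b. y \<in> X - (E \<union> U) \<Longrightarrow> b \<in> A \<Longrightarrow> is_dist X (P y b)"
    and dist_\<pi>: "\<And>y. y \<in> X \<Longrightarrow> is_dist A (\<pi> y)"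
begin

abbreviation H :: "real set" where
  "H \<equiv> X - (E \<union> U)"

abbreviation Q :: "real \<Rightarrow> 'a \<Rightarrow> real" where
  "Q \<equiv> robustQ X E U A \<delta> P \<pi>"

abbreviation trunc_cost :: "(real \<Rightarrow> 'a \<Rightarrow> real \<Rightarrow> real) \<Rightarrow> nat \<Rightarrow> real \<Rightarrow> 'a \<Rightarrow> real" where
  "trunc_cost Pt n y b \<equiv> exp_cost_trunc X E U A Pt \<pi> y b n"

definition ambiguity_ball :: "real \<Rightarrow> 'a \<Rightarrow> (real \<Rightarrow> real) set" where
  "ambiguity_ball y b = {\<mu>. is_dist X \<mu> \<and> wasserstein X \<mu> (P y b) \<le> \<delta>}"

definition next_value :: "(real \<Rightarrow> 'a \<Rightarrow> real) \<Rightarrow> real \<Rightarrow> real" where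
  "next_value w l = cost U l + (if l \<in> H then \<Sum>b\<in>A. w l b * \<pi> l b else 0)"

definition bellman :: "(real \<Rightarrow> 'a \<Rightarrow> real) \<Rightarrow> real \<Rightarrow> 'a \<Rightarrow> real" where
  "bellman w y b = (SUP \<mu>\<in>ambiguity_ball y b. \<Sum>l\<in>X. \<mu> l * next_value w l)"

lemma \<pi>_nonneg: "l \<in> X \<Longrightarrow> b \<in> A \<Longrightarrow> 0 \<le> \<pi> l b"
  using dist_\<pi> by (simp add: is_dist_def)

lemma mem_ambiguity_set_iff:
  "Pt \<in> ambiguity_set X H A \<delta> P \<longleftrightarrow> (\<forall>y\<in>H. \<forall>b\<in>A. Pt y b \<in> ambiguity_ball y b)"
  by (simp add: ambiguity_set_def ambiguity_ball_def)

lemma nominal_in_ambiguity_ball: "y \<in> H \<Longrightarrow> b \<in> A \<Longrightarrow> P y b \<in> ambiguity_ball y b"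
  using dist_P wasserstein_self_nonpos delta_nonneg by (fastforce simp: ambiguity_ball_def)

lemma nominal_in_ambiguity_set: "P \<in> ambiguity_set X H A \<delta> P"
  by (simp add: mem_ambiguity_set_iff nominal_in_ambiguity_ball)

lemma dist_of_ambiguity_ball: "\<mu> \<in> ambiguity_ball y b \<Longrightarrow> is_dist X \<mu>"
  by (simp add: ambiguity_ball_def)

lemma dist_of_ambiguity_set:
  "Pt \<in> ambiguity_set X H A \<delta> P \<Longrightarrow> y \<in> H \<Longrightarrow> b \<in> A \<Longrightarrow> is_dist X (Pt y b)"
  by (simp add: ambiguity_set_def)

lemma next_value_mono:
  assumes "\<forall>l\<in>H. \<forall>b\<in>A. w l b \<le> w' l b"
  shows "next_value w l \<le> next_value w' l"
  using assms \<pi>_nonneg by (auto simp: next_value_def intro!: sum_mono mult_right_mono)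

lemma next_value_bounds:
  assumes "\<forall>l\<in>H. \<forall>b\<in>A. w l b \<in> {0..1}"
  shows "next_value w l \<in> {0..1}"
proof (cases "l \<in> H")
  case True
  have "(\<Sum>b\<in>A. w l b * \<pi> l b) \<in> {0..1}"
    using assms True dist_\<pi>[of l] is_dist_sum_le[of A "\<pi> l" "w l" 1] is_dist_sum_ge[of A "\<pi> l" 0 "w l"]
    by (auto simp: mult.commute)
  then show ?thesis
    using True by (simp add: next_value_def cost_def)
qed (auto simp: next_value_def cost_def)

lemma next_value_shift:
  assumes "\<eta> \<ge> 0"
  shows "next_value (\<lambda>l b. w l b + \<eta>) l \<le> next_value w l + \<eta>"
proof (cases "l \<in> H")
  case True
  then have "(\<Sum>b\<in>A. \<eta> * \<pi> l b) = \<eta>"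
    using is_dist_sum_const[OF dist_\<pi>, of l \<eta>] by (simp add: mult.commute)
  then have "(\<Sum>b\<in>A. (w l b + \<eta>) * \<pi> l b) = (\<Sum>b\<in>A. w l b * \<pi> l b) + \<eta>"
    by (simp add: distrib_right sum.distrib)
  then show ?thesis
    using True by (simp add: next_value_def)
qed (use assms in \<open>auto simp: next_value_def\<close>)

lemma next_value_scale:
  assumes "0 \<le> \<gamma>" and "\<gamma> \<le> 1" and "\<forall>l\<in>H. \<forall>b\<in>A. 0 \<le> w l b"
  shows "\<gamma> * next_value w l \<le> next_value (\<lambda>l b. \<gamma> * w l b) l"
proof -
  have "\<gamma> * cost U l \<le> cost U l"
    using assms cost_nonneg cost_le_1 by (simp add: mult_left_le_one_le)
  then show ?thesis
    by (simp add: next_value_def distrib_left sum_distrib_left mult.assoc)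
qed

lemma next_value_discount:
  assumes "0 \<le> \<gamma>" and "\<gamma> \<le> 1" and "0 \<le> r" and "\<forall>l\<in>H. \<forall>b\<in>A. 0 \<le> v l b"
    and "\<forall>l\<in>H. \<forall>b\<in>A. w l b \<le> v l b + r"
  shows "next_value (\<lambda>l b. \<gamma> * w l b) l \<le> next_value v l + \<gamma> * r"
proof -
  have "\<gamma> * w l b \<le> v l b + \<gamma> * r" if "l \<in> H" and "b \<in> A" for l b
  proof -
    have "\<gamma> * w l b \<le> \<gamma> * v l b + \<gamma> * r"
      using assms that by (simp add: mult_left_mono flip: distrib_left)
    also have "\<dots> \<le> v l b + \<gamma> * r"
      using assms that by (simp add: mult_left_le_one_le)
    finally show ?thesis .
  qed
  then have "next_value (\<lambda>l b. \<gamma> * w l b) l \<le> next_value (\<lambda>l b. v l b + \<gamma> * r) l"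
    by (intro next_value_mono) blast
  also have "\<dots> \<le> next_value v l + \<gamma> * r"
    using assms by (intro next_value_shift) simp
  finally show ?thesis .
qed

lemma bdd_above_ball_values:
  "bdd_above ((\<lambda>\<mu>. \<Sum>l\<in>X. \<mu> l * next_value w l) ` ambiguity_ball y b)"
  using finite_X by (intro bdd_above_expectations) (auto simp: ambiguity_ball_def)

lemma bellman_upper: "\<mu> \<in> ambiguity_ball y b \<Longrightarrow> (\<Sum>l\<in>X. \<mu> l * next_value w l) \<le> bellman w y b"
  unfolding bellman_def by (rule cSUP_upper[OF _ bdd_above_ball_values])

lemma bellman_least:
  assumes "y \<in> H" and "b \<in> A" and "\<And>\<mu>. \<mu> \<in> ambiguity_ball y b \<Longrightarrow> (\<Sum>l\<in>X. \<mu> l * next_value w l) \<le> c"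
  shows "bellman w y b \<le> c"
  unfolding bellman_def using nominal_in_ambiguity_ball[OF assms(1,2)] assms(3)
  by (intro cSUP_least) auto

lemma bellman_approx:
  assumes "y \<in> H" and "b \<in> A" and "e > 0"
  shows "\<exists>\<mu>\<in>ambiguity_ball y b. bellman w y b < (\<Sum>l\<in>X. \<mu> l * next_value w l) + e"
proof -
  have "ambiguity_ball y b \<noteq> {}"
    using nominal_in_ambiguity_ball[OF assms(1,2)] by blast
  moreover have "bellman w y b - e < bellman w y b"
    using assms(3) by simp
  ultimately have "\<exists>\<mu>\<in>ambiguity_ball y b. bellman w y b - e < (\<Sum>l\<in>X. \<mu> l * next_value w l)"
    unfolding bellman_def by (simp add: less_cSUP_iff[OF _ bdd_above_ball_values])
  then show ?thesis
    by (auto simp: algebra_simps)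
qed

lemma bellman_mono:
  assumes "y \<in> H" and "b \<in> A" and "\<forall>l\<in>H. \<forall>b\<in>A. w l b \<le> w' l b"
  shows "bellman w y b \<le> bellman w' y b"
proof (rule bellman_least[OF assms(1,2)])
  fix \<mu>
  assume \<mu>: "\<mu> \<in> ambiguity_ball y b"
  have "(\<Sum>l\<in>X. \<mu> l * next_value w l) \<le> (\<Sum>l\<in>X. \<mu> l * next_value w' l)"
    using dist_of_ambiguity_ball[OF \<mu>] next_value_mono[OF assms(3)] by (rule is_dist_sum_mono)
  also have "\<dots> \<le> bellman w' y b"
    using \<mu> by (rule bellman_upper)
  finally show "(\<Sum>l\<in>X. \<mu> l * next_value w l) \<le> bellman w' y b" .
qed

lemma bellman_shift:
  assumes "y \<in> H" and "b \<in> A" and "\<eta> \<ge> 0"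
  shows "bellman (\<lambda>l b. w l b + \<eta>) y b \<le> bellman w y b + \<eta>"
proof (rule bellman_least[OF assms(1,2)])
  fix \<mu>
  assume \<mu>: "\<mu> \<in> ambiguity_ball y b"
  note dist = dist_of_ambiguity_ball[OF \<mu>]
  have "(\<Sum>l\<in>X. \<mu> l * next_value (\<lambda>l b. w l b + \<eta>) l) \<le> (\<Sum>l\<in>X. \<mu> l * (next_value w l + \<eta>))"
    using dist next_value_shift[OF assms(3)] by (rule is_dist_sum_mono)
  also have "\<dots> = (\<Sum>l\<in>X. \<mu> l * next_value w l) + \<eta>"
    using is_dist_sum_const[OF dist] by (simp add: distrib_left sum.distrib)
  also have "\<dots> \<le> bellman w y b + \<eta>"
    using bellman_upper[OF \<mu>] by simp
  finally show "(\<Sum>l\<in>X. \<mu> l * next_value (\<lambda>l b. w l b + \<eta>) l) \<le> bellman w y b + \<eta>" .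
qed

lemma bellman_scale:
  assumes "y \<in> H" and "b \<in> A" and "0 < \<gamma>" and "\<gamma> \<le> 1" and "\<forall>l\<in>H. \<forall>b\<in>A. 0 \<le> w l b"
  shows "\<gamma> * bellman w y b \<le> bellman (\<lambda>l b. \<gamma> * w l b) y b"
proof -
  have "bellman w y b \<le> bellman (\<lambda>l b. \<gamma> * w l b) y b / \<gamma>"
  proof (rule bellman_least[OF assms(1,2)])
    fix \<mu>
    assume \<mu>: "\<mu> \<in> ambiguity_ball y b"
    have "\<gamma> * (\<Sum>l\<in>X. \<mu> l * next_value w l) = (\<Sum>l\<in>X. \<mu> l * (\<gamma> * next_value w l))"
      by (simp add: sum_distrib_left mult.left_commute)
    also have "\<dots> \<le> (\<Sum>l\<in>X. \<mu> l * next_value (\<lambda>l b. \<gamma> * w l b) l)"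
      using dist_of_ambiguity_ball[OF \<mu>] next_value_scale assms(3-5) by (intro is_dist_sum_mono) auto
    also have "\<dots> \<le> bellman (\<lambda>l b. \<gamma> * w l b) y b"
      using \<mu> by (rule bellman_upper)
    finally show "(\<Sum>l\<in>X. \<mu> l * next_value w l) \<le> bellman (\<lambda>l b. \<gamma> * w l b) y b / \<gamma>"
      using assms(3) by (simp add: pos_le_divide_eq mult.commute)
  qed
  then show ?thesis
    using assms(3) by (simp add: pos_le_divide_eq mult.commute)
qed

lemma bellman_bounds:
  assumes "y \<in> H" and "b \<in> A" and "\<forall>l\<in>H. \<forall>b\<in>A. w l b \<in> {0..1}"
  shows "bellman w y b \<in> {0..1}"
proof -
  have "0 \<le> (\<Sum>l\<in>X. P y b l * next_value w l)"
    using dist_P[OF assms(1,2)] next_value_bounds[OF assms(3)] by (intro is_dist_sum_ge) auto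
  also have "\<dots> \<le> bellman w y b"
    using nominal_in_ambiguity_ball[OF assms(1,2)] by (rule bellman_upper)
  finally show ?thesis
    using next_value_bounds[OF assms(3)] dist_of_ambiguity_ball
    by (auto intro!: bellman_least[OF assms(1,2)] is_dist_sum_le)
qed

definition hit_prob :: "(real \<Rightarrow> 'a \<Rightarrow> real \<Rightarrow> real) \<Rightarrow> nat \<Rightarrow> real \<Rightarrow> 'a \<Rightarrow> real" where
  "hit_prob Pt t y b = (\<Sum>xs\<in>{xs. set xs \<subseteq> H \<times> A \<and> length xs = t}. \<Sum>z\<in>U. traj_prob Pt \<pi> y b xs z)"

lemma trunc_cost_eq_sum_hit_prob: "y \<in> H \<Longrightarrow> trunc_cost Pt n y b = (\<Sum>t<n. hit_prob Pt t y b)"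
  by (simp add: exp_cost_trunc_def hit_prob_def)

lemma trunc_cost_outside:
  assumes "y \<notin> H"
  shows "trunc_cost Pt n y b = 0"
  unfolding exp_cost_trunc_def Let_def if_not_P[OF assms] by simp

lemma trunc_cost_0: "trunc_cost Pt 0 y b = 0"
  by (simp add: exp_cost_trunc_def)

lemma hit_prob_0: "hit_prob Pt 0 y b = (\<Sum>z\<in>U. Pt y b z)"
proof -
  have "{xs. set xs \<subseteq> H \<times> A \<and> length xs = 0} = {[]}"
    by auto
  then show ?thesis
    by (simp add: hit_prob_def)
qed

lemma hit_prob_Suc:
  "hit_prob Pt (Suc t) y b = (\<Sum>l\<in>H. \<Sum>b'\<in>A. Pt y b l * \<pi> l b' * hit_prob Pt t l b')"
proof -
  let ?L = "{xs. set xs \<subseteq> H \<times> A \<and> length xs = t}"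
  have inj: "inj_on (\<lambda>(q, r). q # r) ((H \<times> A) \<times> ?L)"
    by (auto simp: inj_on_def)
  have lists: "{xs. set xs \<subseteq> H \<times> A \<and> length xs = Suc t} = (\<lambda>(q, r). q # r) ` ((H \<times> A) \<times> ?L)"
    by (auto simp: length_Suc_conv image_iff)
  have "hit_prob Pt (Suc t) y b = (\<Sum>qr\<in>(H \<times> A) \<times> ?L. \<Sum>z\<in>U. traj_prob Pt \<pi> y b ((\<lambda>(q, r). q # r) qr) z)"
    unfolding hit_prob_def lists sum.reindex[OF inj] comp_def ..
  also have "\<dots> = (\<Sum>q\<in>H \<times> A. \<Sum>r\<in>?L. \<Sum>z\<in>U. traj_prob Pt \<pi> y b (q # r) z)"
    by (simp only: sum.cartesian_product' prod.case)
  also have "\<dots> = (\<Sum>q\<in>H \<times> A. Pt y b (fst q) * \<pi> (fst q) (snd q) * hit_prob Pt t (fst q) (snd q))"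
    by (intro sum.cong refl) (auto simp: hit_prob_def sum_distrib_left)
  finally show ?thesis
    by (simp add: sum.cartesian_product case_prod_beta)
qed

lemma expectation_next_value:
  "(\<Sum>l\<in>X. \<mu> l * next_value w l) = (\<Sum>z\<in>U. \<mu> z) + (\<Sum>l\<in>H. \<Sum>b\<in>A. \<mu> l * \<pi> l b * w l b)"
proof -
  have "(\<Sum>l\<in>X. \<mu> l * next_value w l)
      = (\<Sum>l\<in>X. if l \<in> U then \<mu> l else 0) + (\<Sum>l\<in>X. if l \<in> H then \<Sum>b\<in>A. \<mu> l * \<pi> l b * w l b else 0)"
    unfolding sum.distrib[symmetric]
    by (intro sum.cong refl) (auto simp: next_value_def cost_def sum_distrib_left mult_ac)
  also have "\<dots> = (\<Sum>z\<in>U. \<mu> z) + (\<Sum>l\<in>H. \<Sum>b\<in>A. \<mu> l * \<pi> l b * w l b)"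
    using U_subset by (simp only: sum.inter_restrict[OF finite_X, symmetric] Int_absorb1 Diff_subset)
  finally show ?thesis .
qed

lemma trunc_cost_Suc:
  assumes "y \<in> H"
  shows "trunc_cost Pt (Suc n) y b = (\<Sum>l\<in>X. Pt y b l * next_value (\<lambda>l b. trunc_cost Pt n l b) l)"
proof -
  have "(\<Sum>t<n. hit_prob Pt (Suc t) y b)
      = (\<Sum>t<n. \<Sum>l\<in>H. \<Sum>b'\<in>A. Pt y b l * \<pi> l b' * hit_prob Pt t l b')"
    by (simp only: hit_prob_Suc)
  also have "\<dots> = (\<Sum>l\<in>H. \<Sum>b'\<in>A. \<Sum>t<n. Pt y b l * \<pi> l b' * hit_prob Pt t l b')"
    by (subst sum.swap) (simp only: sum.swap[of _ "{..<n}" A])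
  also have "\<dots> = (\<Sum>l\<in>H. \<Sum>b'\<in>A. Pt y b l * \<pi> l b' * trunc_cost Pt n l b')"
    by (intro sum.cong refl) (simp add: trunc_cost_eq_sum_hit_prob sum_distrib_left)
  moreover have "trunc_cost Pt (Suc n) y b = hit_prob Pt 0 y b + (\<Sum>t<n. hit_prob Pt (Suc t) y b)"
    using assms by (simp only: trunc_cost_eq_sum_hit_prob sum.lessThan_Suc_shift)
  ultimately show ?thesis
    by (simp add: hit_prob_0 expectation_next_value)
qed

lemma trunc_cost_bounds:
  assumes "Pt \<in> ambiguity_set X H A \<delta> P" and "b \<in> A"
  shows "trunc_cost Pt n y b \<in> {0..1}"
  using assms(2)
proof (induction n arbitrary: y b)
  case (Suc n)
  show ?case
  proof (cases "y \<in> H")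
    case True
    have "next_value (\<lambda>l b. trunc_cost Pt n l b) l \<in> {0..1}" for l
      using Suc.IH by (intro next_value_bounds) blast
    then show ?thesis
      using dist_of_ambiguity_set[OF assms(1) True Suc.prems]
      by (auto simp: trunc_cost_Suc[OF True] intro!: is_dist_sum_le is_dist_sum_ge)
  qed (simp add: trunc_cost_outside)
qed (simp add: trunc_cost_0)

lemma trunc_cost_le_exp_cost:
  "Pt \<in> ambiguity_set X H A \<delta> P \<Longrightarrow> b \<in> A \<Longrightarrow> trunc_cost Pt n y b \<le> exp_cost X E U A Pt \<pi> y b"
  unfolding exp_cost_def using trunc_cost_bounds
  by (intro cSUP_upper bdd_aboveI[where M = 1]) auto

lemma exp_cost_bounds:
  assumes "Pt \<in> ambiguity_set X H A \<delta> P" and "b \<in> A"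
  shows "exp_cost X E U A Pt \<pi> y b \<in> {0..1}"
proof -
  have "0 \<le> exp_cost X E U A Pt \<pi> y b"
    using trunc_cost_le_exp_cost[OF assms, where n = 0] by (simp add: trunc_cost_0)
  moreover have "exp_cost X E U A Pt \<pi> y b \<le> 1"
    unfolding exp_cost_def using trunc_cost_bounds[OF assms] by (intro cSUP_least) auto
  ultimately show ?thesis
    by simp
qed

lemma exp_cost_le_Q:
  "Pt \<in> ambiguity_set X H A \<delta> P \<Longrightarrow> b \<in> A \<Longrightarrow> exp_cost X E U A Pt \<pi> y b \<le> Q y b"
  unfolding robustQ_def using exp_cost_bounds
  by (intro cSUP_upper bdd_aboveI[where M = 1]) auto

lemma Q_le:
  assumes "\<And>Pt n. Pt \<in> ambiguity_set X H A \<delta> P \<Longrightarrow> trunc_cost Pt n y b \<le> c"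
  shows "Q y b \<le> c"
  unfolding robustQ_def exp_cost_def using nominal_in_ambiguity_set assms
  by (intro cSUP_least) auto

lemma Q_outside:
  assumes "y \<notin> H"
  shows "Q y b = 0"
proof -
  have zero: "exp_cost X E U A Pt \<pi> y b = 0" for Pt
    unfolding exp_cost_def trunc_cost_outside[OF assms] by simp
  have "ambiguity_set X H A \<delta> P \<noteq> {}"
    using nominal_in_ambiguity_set by blast
  then show ?thesis
    unfolding robustQ_def zero by (rule cSUP_const)
qed

primrec value_iter :: "real \<Rightarrow> nat \<Rightarrow> real \<Rightarrow> 'a \<Rightarrow> real" where
  "value_iter \<gamma> 0 = (\<lambda>_ _. 0)"
| "value_iter \<gamma> (Suc n) = bellman (\<lambda>l b. \<gamma> * value_iter \<gamma> n l b)"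

lemma value_iter_bounds:
  assumes "0 \<le> \<gamma>" and "\<gamma> \<le> 1"
  shows "\<forall>y\<in>H. \<forall>b\<in>A. value_iter \<gamma> n y b \<in> {0..1}"
proof (induction n)
  case (Suc n)
  then have "\<forall>l\<in>H. \<forall>b\<in>A. \<gamma> * value_iter \<gamma> n l b \<in> {0..1}"
    using assms by (auto intro: mult_le_one)
  then show ?case
    using bellman_bounds by simp
qed simp

lemma value_iter_mono:
  assumes "0 \<le> \<gamma>" and "\<gamma> \<le> 1"
  shows "\<forall>y\<in>H. \<forall>b\<in>A. value_iter \<gamma> n y b \<le> value_iter \<gamma> (Suc n) y b"
proof (induction n)
  case 0
  then show ?case
    using bellman_bounds[of _ _ "\<lambda>_ _. 0"] by simp
next
  case (Suc n)
  then have "\<forall>l\<in>H. \<forall>b\<in>A. \<gamma> * value_iter \<gamma> n l b \<le> \<gamma> * value_iter \<gamma> (Suc n) l b"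
    using assms by (auto intro: mult_left_mono)
  then show ?case
    by (simp add: bellman_mono)
qed

lemma exists_kernel_near_bellman:
  assumes "e > 0"
  shows "\<exists>Pt\<in>ambiguity_set X H A \<delta> P.
           \<forall>y\<in>H. \<forall>b\<in>A. bellman w y b \<le> (\<Sum>l\<in>X. Pt y b l * next_value w l) + e"
proof -
  have "\<forall>y\<in>H. \<exists>\<mu>. \<forall>b\<in>A. \<mu> b \<in> ambiguity_ball y b
           \<and> bellman w y b < (\<Sum>l\<in>X. \<mu> b l * next_value w l) + e"
    using bellman_approx[OF _ _ assms] by (intro ballI bchoice) blast
  then obtain Pt where "\<forall>y\<in>H. \<forall>b\<in>A. Pt y b \<in> ambiguity_ball y b
           \<and> bellman w y b < (\<Sum>l\<in>X. Pt y b l * next_value w l) + e"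
    by (auto dest!: bchoice)
  then show ?thesis
    by (intro bexI[of _ Pt]) (auto simp: mem_ambiguity_set_iff less_imp_le)
qed

text \<open>The discount makes the error of a single, nearly optimal stationary kernel contract
  along the trajectory.\<close>

lemma sub_fixed_point_le_trunc_cost:
  assumes Pt: "Pt \<in> ambiguity_set X H A \<delta> P" and \<gamma>: "0 \<le> \<gamma>" "\<gamma> \<le> 1" and e: "0 \<le> e"
    and w: "\<forall>y\<in>H. \<forall>b\<in>A. w y b \<in> {0..1}"
    and sub: "\<forall>y\<in>H. \<forall>b\<in>A. w y b \<le> bellman (\<lambda>l b. \<gamma> * w l b) y b"
    and near: "\<forall>y\<in>H. \<forall>b\<in>A. bellman (\<lambda>l b. \<gamma> * w l b) y b
                 \<le> (\<Sum>l\<in>X. Pt y b l * next_value (\<lambda>l b. \<gamma> * w l b) l) + e"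
  shows "\<forall>y\<in>H. \<forall>b\<in>A. w y b \<le> trunc_cost Pt k y b + \<gamma> ^ k + real k * e"
proof (induction k)
  case 0
  then show ?case
    using w by (simp add: trunc_cost_0)
next
  case (Suc k)
  define r where "r = \<gamma> ^ k + real k * e"
  show ?case
  proof (intro ballI)
    fix y b
    assume y: "y \<in> H" and b: "b \<in> A"
    note dist = dist_of_ambiguity_set[OF Pt y b]
    have "next_value (\<lambda>l b. \<gamma> * w l b) l \<le> next_value (\<lambda>l b. trunc_cost Pt k l b) l + \<gamma> * r" for l
      using Suc.IH trunc_cost_bounds[OF Pt] \<gamma> e
      by (intro next_value_discount) (auto simp: r_def add.assoc)
    then have "w y b \<le> (\<Sum>l\<in>X. Pt y b l * (next_value (\<lambda>l b. trunc_cost Pt k l b) l + \<gamma> * r)) + e"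
      using sub near y b is_dist_sum_mono[OF dist] by (meson add_right_mono order_trans)
    also have "\<dots> = trunc_cost Pt (Suc k) y b + \<gamma> * r + e"
      using is_dist_sum_const[OF dist] by (simp add: trunc_cost_Suc[OF y] distrib_left sum.distrib)
    also have "\<dots> \<le> trunc_cost Pt (Suc k) y b + \<gamma> ^ Suc k + real (Suc k) * e"
      using \<gamma> e by (simp add: r_def distrib_left mult_left_le_one_le algebra_simps)
    finally show "w y b \<le> trunc_cost Pt (Suc k) y b + \<gamma> ^ Suc k + real (Suc k) * e" .
  qed
qed

lemma sub_fixed_point_le_Q:
  assumes \<gamma>: "0 < \<gamma>" "\<gamma> < 1" and w: "\<forall>y\<in>H. \<forall>b\<in>A. w y b \<in> {0..1}"
    and sub: "\<forall>y\<in>H. \<forall>b\<in>A. w y b \<le> bellman (\<lambda>l b. \<gamma> * w l b) y b"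
    and y: "y \<in> H" and b: "b \<in> A"
  shows "w y b \<le> Q y b"
proof -
  have approx: "w y b \<le> Q y b + \<gamma> ^ k + real k * e" if "e > 0" for k e
  proof -
    obtain Pt where Pt: "Pt \<in> ambiguity_set X H A \<delta> P"
      and near: "\<forall>y\<in>H. \<forall>b\<in>A. bellman (\<lambda>l b. \<gamma> * w l b) y b
                   \<le> (\<Sum>l\<in>X. Pt y b l * next_value (\<lambda>l b. \<gamma> * w l b) l) + e"
      using exists_kernel_near_bellman[OF \<open>e > 0\<close>] by blast
    have "w y b \<le> trunc_cost Pt k y b + \<gamma> ^ k + real k * e"
      using sub_fixed_point_le_trunc_cost[OF Pt _ _ _ w sub near] \<gamma> \<open>e > 0\<close> y b by simp
    moreover have "trunc_cost Pt k y b \<le> Q y b"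
      using trunc_cost_le_exp_cost[OF Pt b] exp_cost_le_Q[OF Pt b] by (rule order_trans)
    ultimately show ?thesis
      by simp
  qed
  have "w y b - Q y b \<le> \<gamma> ^ k" for k
  proof (rule field_le_epsilon)
    fix e :: real
    assume "e > 0"
    then have "real k * (e / (real k + 1)) \<le> e"
      by (simp add: field_simps)
    then show "w y b - Q y b \<le> \<gamma> ^ k + e"
      using approx[of "e / (real k + 1)" k] \<open>e > 0\<close> by simp
  qed
  then have "w y b - Q y b \<le> 0"
    using \<gamma> by (intro LIMSEQ_le_const[OF LIMSEQ_power_zero]) auto
  then show ?thesis
    by simp
qed

lemma value_iter_le_Q:
  assumes "0 < \<gamma>" and "\<gamma> < 1" and "y \<in> H" and "b \<in> A"
  shows "value_iter \<gamma> n y b \<le> Q y b"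
proof (rule sub_fixed_point_le_Q[OF assms(1,2) _ _ assms(3,4)])
  show "\<forall>y\<in>H. \<forall>b\<in>A. value_iter \<gamma> n y b \<in> {0..1}"
    using assms(1,2) by (intro value_iter_bounds) simp_all
  show "\<forall>y\<in>H. \<forall>b\<in>A. value_iter \<gamma> n y b \<le> bellman (\<lambda>l b. \<gamma> * value_iter \<gamma> n l b) y b"
    using value_iter_mono[of \<gamma> n] assms(1,2) by simp
qed

lemma power_mult_value_iter_le:
  assumes "0 < \<gamma>" and "\<gamma> \<le> 1"
  shows "\<forall>y\<in>H. \<forall>b\<in>A. \<gamma> ^ n * value_iter 1 n y b \<le> value_iter \<gamma> n y b"
proof (induction n)
  case (Suc n)
  show ?case
  proof (intro ballI)
    fix y b
    assume y: "y \<in> H" and b: "b \<in> A"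
    have "0 < \<gamma> ^ Suc n" and "\<gamma> ^ Suc n \<le> 1"
      using assms by (simp, intro power_le_one) simp_all
    moreover have "\<forall>l\<in>H. \<forall>b\<in>A. 0 \<le> value_iter 1 n l b"
      using value_iter_bounds[of 1 n] by simp
    ultimately have "\<gamma> ^ Suc n * bellman (value_iter 1 n) y b
        \<le> bellman (\<lambda>l b. \<gamma> ^ Suc n * value_iter 1 n l b) y b"
      by (rule bellman_scale[OF y b])
    then have "\<gamma> ^ Suc n * value_iter 1 (Suc n) y b \<le> bellman (\<lambda>l b. \<gamma> ^ Suc n * value_iter 1 n l b) y b"
      by simp
    also have "\<dots> \<le> value_iter \<gamma> (Suc n) y b"
      using Suc.IH assms by (simp add: bellman_mono[OF y b] mult.assoc mult_left_mono)
    finally show "\<gamma> ^ Suc n * value_iter 1 (Suc n) y b \<le> value_iter \<gamma> (Suc n) y b" .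
  qed
qed simp

lemma value_iter_1_le_Q:
  assumes y: "y \<in> H" and b: "b \<in> A"
  shows "value_iter 1 n y b \<le> Q y b"
proof (rule le_of_power_mult_le)
  fix \<gamma> :: real
  assume "0 < \<gamma>" and "\<gamma> < 1"
  then have "\<gamma> ^ n * value_iter 1 n y b \<le> value_iter \<gamma> n y b"
    using power_mult_value_iter_le[of \<gamma> n] y b by simp
  also have "\<dots> \<le> Q y b"
    using \<open>0 < \<gamma>\<close> \<open>\<gamma> < 1\<close> y b by (rule value_iter_le_Q)
  finally show "\<gamma> ^ n * value_iter 1 n y b \<le> Q y b" .
qed

lemma trunc_cost_le_value_iter:
  assumes Pt: "Pt \<in> ambiguity_set X H A \<delta> P"
  shows "\<forall>y\<in>H. \<forall>b\<in>A. trunc_cost Pt n y b \<le> value_iter 1 n y b"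
proof (induction n)
  case (Suc n)
  show ?case
  proof (intro ballI)
    fix y b
    assume y: "y \<in> H" and b: "b \<in> A"
    have "trunc_cost Pt (Suc n) y b \<le> (\<Sum>l\<in>X. Pt y b l * next_value (value_iter 1 n) l)"
      unfolding trunc_cost_Suc[OF y] using dist_of_ambiguity_set[OF Pt y b] Suc.IH
      by (intro is_dist_sum_mono next_value_mono) auto
    also have "\<dots> \<le> value_iter 1 (Suc n) y b"
      using bellman_upper[of "Pt y b" y b "value_iter 1 n"] Pt y b by (simp add: mem_ambiguity_set_iff)
    finally show "trunc_cost Pt (Suc n) y b \<le> value_iter 1 (Suc n) y b" .
  qed
qed (simp add: trunc_cost_0)

lemma value_iter_mono_le:
  assumes "y \<in> H" and "b \<in> A" and "m \<le> n"
  shows "value_iter 1 m y b \<le> value_iter 1 n y b"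
proof -
  have "value_iter 1 k y b \<le> value_iter 1 (Suc k) y b" for k
    using value_iter_mono[OF zero_le_one order_refl, of k] assms(1,2) by blast
  then show ?thesis
    using assms(3) by (rule lift_Suc_mono_le)
qed

lemma Q_le_of_value_iter_le:
  assumes "y \<in> H" and "b \<in> A" and "\<And>n. value_iter 1 n y b \<le> c"
  shows "Q y b \<le> c"
proof (rule Q_le)
  fix Pt n
  assume "Pt \<in> ambiguity_set X H A \<delta> P"
  then have "trunc_cost Pt n y b \<le> value_iter 1 n y b"
    using trunc_cost_le_value_iter assms(1,2) by blast
  then show "trunc_cost Pt n y b \<le> c"
    using assms(3)[of n] by linarith
qed

lemma value_iter_tendsto_Q:
  assumes y: "y \<in> H" and b: "b \<in> A"
  shows "(\<lambda>n. value_iter 1 n y b) \<longlonglongrightarrow> Q y b"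
proof (rule increasing_tendsto)
  show "\<forall>\<^sub>F n in sequentially. value_iter 1 n y b \<le> Q y b"
    using value_iter_1_le_Q[OF y b] by (intro always_eventually) blast
next
  fix c
  assume "c < Q y b"
  then obtain N where "c < value_iter 1 N y b"
    using Q_le_of_value_iter_le[OF y b, of c] by (meson not_le)
  then show "\<forall>\<^sub>F n in sequentially. c < value_iter 1 n y b"
    using value_iter_mono_le[OF y b] by (intro eventually_sequentiallyI[of N]) (meson less_le_trans)
qed

lemma bellman_Q:
  assumes y: "y \<in> H" and b: "b \<in> A"
  shows "bellman Q y b = Q y b"
proof (rule antisym)
  show "bellman Q y b \<le> Q y b"
  proof (rule field_le_epsilon)
    fix e :: real
    assume "e > 0"
    have "\<forall>l\<in>H. \<forall>b\<in>A. \<forall>\<^sub>F n in sequentially. Q l b \<le> value_iter 1 n l b + e"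
    proof (intro ballI)
      fix l b'
      assume "l \<in> H" and "b' \<in> A"
      moreover have "Q l b' - e < Q l b'"
        using \<open>e > 0\<close> by simp
      ultimately have "\<forall>\<^sub>F n in sequentially. Q l b' - e < value_iter 1 n l b'"
        by (intro order_tendstoD(1)[OF value_iter_tendsto_Q])
      then show "\<forall>\<^sub>F n in sequentially. Q l b' \<le> value_iter 1 n l b' + e"
        by eventually_elim simp
    qed
    then have "\<forall>\<^sub>F n in sequentially. \<forall>l\<in>H. \<forall>b\<in>A. Q l b \<le> value_iter 1 n l b + e"
      using finite_X finite_A by (auto intro!: eventually_ball_finite)
    then obtain N where N: "\<forall>l\<in>H. \<forall>b\<in>A. Q l b \<le> value_iter 1 N l b + e"
      unfolding eventually_sequentially by blast
    have "bellman Q y b \<le> bellman (\<lambda>l b. value_iter 1 N l b + e) y b"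
      using N by (rule bellman_mono[OF y b])
    also have "\<dots> \<le> value_iter 1 (Suc N) y b + e"
      using bellman_shift[OF y b] \<open>e > 0\<close> by simp
    also have "\<dots> \<le> Q y b + e"
      using value_iter_1_le_Q[OF y b, of "Suc N"] by linarith
    finally show "bellman Q y b \<le> Q y b + e" .
  qed
  have "value_iter 1 (Suc n) y b \<le> bellman Q y b" for n
    using value_iter_1_le_Q by (simp add: bellman_mono[OF y b])
  then show "Q y b \<le> bellman Q y b"
    using LIMSEQ_Suc[OF value_iter_tendsto_Q[OF y b]] by (intro LIMSEQ_le_const2) auto
qed

lemma next_value_Q: "next_value Q l = cost U l + (\<Sum>a'\<in>A. Q l a' * \<pi> l a')"
proof (cases "l \<in> H")
  case False
  then show ?thesis
    unfolding next_value_def if_not_P[OF False] Q_outside[OF False] by simp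
qed (simp add: next_value_def)

lemma Q_eq_dual:
  assumes x: "x \<in> H" and a: "a \<in> A"
  shows "Q x a = Inf {lam * \<delta> + (\<Sum>y\<in>X. h y * P x a y) | lam h. lam \<ge> 0 \<and>
          (\<forall>y\<in>X. Max ((\<lambda>l. - lam * \<bar>l - y\<bar> + cost U l + (\<Sum>a'\<in>A. Q l a' * \<pi> l a')) ` X) \<le> h y)}"
proof -
  interpret wasserstein_dual X "P x a" "next_value Q" \<delta>
    using dist_P[OF x a] delta_nonneg by unfold_locales
  have "Q x a = bellman Q x a"
    using bellman_Q[OF x a] by simp
  also have "\<dots> = Inf {lam * \<delta> + (\<Sum>y\<in>X. h y * P x a y) | lam h. lam \<ge> 0 \<and>
          (\<forall>y\<in>X. Max ((\<lambda>l. - lam * \<bar>l - y\<bar> + next_value Q l) ` X) \<le> h y)}"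
    unfolding bellman_def ambiguity_ball_def by (rule duality)
  finally show ?thesis
    by (simp only: next_value_Q add.assoc)
qed

end

theorem mainTheorem5:
  fixes X E U :: "real set" and A :: "'a set" and \<delta> :: real
    and P :: "real \<Rightarrow> 'a \<Rightarrow> real \<Rightarrow> real" and \<pi> :: "real \<Rightarrow> 'a \<Rightarrow> real"
    and x :: real and a :: 'a
  assumes "finite X" and "finite A"
    and "E \<subseteq> X" and "U \<subseteq> X" and "E \<inter> U = {}"
    and "\<delta> \<ge> 0"
    and "\<And>y b. y \<in> X - (E \<union> U) \<Longrightarrow> b \<in> A \<Longrightarrow> is_dist X (P y b)"
    and "\<And>y. y \<in> X \<Longrightarrow> is_dist A (\<pi> y)"
    and "x \<in> X - (E \<union> U)" and "a \<in> A"
  shows "robustQ X E U A \<delta> P \<pi> x a =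
     Inf {lam * \<delta> + (\<Sum>y\<in>X. h y * P x a y) | lam h. lam \<ge> 0 \<and>
          (\<forall>y\<in>X. Max ((\<lambda>l. - lam * \<bar>l - y\<bar> + cost U l
                 + (\<Sum>a'\<in>A. robustQ X E U A \<delta> P \<pi> l a' * \<pi> l a')) ` X) \<le> h y)}"
proof -
  interpret robust_mdp X E U A \<delta> P \<pi>
    using assms(1,2,4,6-8) by unfold_locales
  show ?thesis
    using assms(9,10) by (rule Q_eq_dual)
qed

end
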